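(* For every $\lambda\in\Lambda$, $K(Q_\lambda,B)\subset B_0\sqcup B_1$, where $B_0=\{z:|z|<1\}$ and $B_1=\{z:|z-1|<1\}$.
   Context: Let $p$ be a prime, $\mathbb C_p$ with $p$-adic absolute value, $|p|=1/p$. $\Lambda=\{\lambda\in\mathbb C_p:|\lambda-1|<1\}$, $P_\lambda(z)=\frac{\lambda}{p}z^p+\left(1-\frac{\lambda}{p}\right)z^{p+1}$, $\rho=p^{-1/(p-1)}$. Fix $\hat r\in|\mathbb C_p^*|$, $\hat r>1$, $B=\{z:|z|\le\hat r\}$; $\mathcal H(B)$ is the ring of power series $\sum a_iz^i$ convergent on $B$ with norm $\|f\|_B=\sup_i|a_i|\hat r^{\,i}$. Fix $Q\in\mathcal H(B)$ with $\|Q\|_B<\rho$, $Q^*_\lambda=P_\lambda+Q$, and let $h(\lambda)$ be the unique fixed point of $Q^*_\lambda$ in $\{z:|z-1|\le|Q(1)|/p\}$. Define $Q_\lambda(z)=P_\lambda(z+h(\lambda)-1)+Q(z+h(\lambda)-1)+1-h(\lambda)$ for $z\in B$, and $K(Q_\lambda,B)=\{z\in B:Q_\lambda^n(z)\in B\ \forall n\ge0\}$. *)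

theory Defs
  imports Complex_Main "HOL-Computational_Algebra.Polynomial" "HOL-Computational_Algebra.Primes"
begin

text \<open>Abstract characterisation of (C_p, |.|): a field of characteristic 0 with a
  non-archimedean absolute value nrm, normalised by |p| = 1/p, complete, algebraically closed,
  and in which the algebraic numbers (over Q) are dense.  These properties determine C_p up to
  isometric isomorphism.\<close>

definition is_Cp :: "nat \<Rightarrow> ('a::field_char_0 \<Rightarrow> real) \<Rightarrow> bool" where
  "is_Cp p nrm \<longleftrightarrow>
     (\<forall>x. nrm x \<ge> 0) \<and> (\<forall>x. nrm x = 0 \<longleftrightarrow> x = 0) \<and>
     (\<forall>x y. nrm (x * y) = nrm x * nrm y) \<and>
     (\<forall>x y. nrm (x + y) \<le> max (nrm x) (nrm y)) \<and>
     nrm (of_nat p) = 1 / real p \<and>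
     (\<forall>X::nat \<Rightarrow> 'a. (\<forall>e>0. \<exists>N. \<forall>m\<ge>N. \<forall>n\<ge>N. nrm (X m - X n) < e)
          \<longrightarrow> (\<exists>L. (\<lambda>n. nrm (X n - L)) \<longlonglongrightarrow> 0)) \<and>
     (\<forall>q::'a poly. degree q > 0 \<longrightarrow> (\<exists>x. poly q x = 0)) \<and>
     (\<forall>x e. e > 0 \<longrightarrow> (\<exists>y. nrm (x - y) < e \<and>
          (\<exists>q::int poly. q \<noteq> 0 \<and> poly (map_poly of_int q) y = 0)))"

text \<open>Power series sum_i a_i z^i: convergence on the closed disc of radius r
  (non-archimedean: |a_i| r^i \<rightarrow> 0), Gauss norm, and evaluation.\<close>

definition ps_conv_on :: "('a::field_char_0 \<Rightarrow> real) \<Rightarrow> real \<Rightarrow> (nat \<Rightarrow> 'a) \<Rightarrow> bool" where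
  "ps_conv_on nrm r a \<longleftrightarrow> (\<lambda>i. nrm (a i) * r ^ i) \<longlonglongrightarrow> 0"

definition ps_norm :: "('a::field_char_0 \<Rightarrow> real) \<Rightarrow> real \<Rightarrow> (nat \<Rightarrow> 'a) \<Rightarrow> real" where
  "ps_norm nrm r a = (SUP i. nrm (a i) * r ^ i)"

definition ps_eval :: "('a::field_char_0 \<Rightarrow> real) \<Rightarrow> (nat \<Rightarrow> 'a) \<Rightarrow> 'a \<Rightarrow> 'a" where
  "ps_eval nrm a z = (THE s. (\<lambda>n. nrm ((\<Sum>i<n. a i * z ^ i) - s)) \<longlonglongrightarrow> 0)"

definition Pfam :: "nat \<Rightarrow> 'a::field_char_0 \<Rightarrow> 'a \<Rightarrow> 'a" where
  "Pfam p lam z = lam / of_nat p * z ^ p + (1 - lam / of_nat p) * z ^ (p + 1)"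

definition hfix :: "nat \<Rightarrow> ('a::field_char_0 \<Rightarrow> real) \<Rightarrow> (nat \<Rightarrow> 'a) \<Rightarrow> 'a \<Rightarrow> 'a" where
  "hfix p nrm a lam = (THE w. nrm (w - 1) \<le> nrm (ps_eval nrm a 1) / real p \<and>
                             Pfam p lam w + ps_eval nrm a w = w)"

definition Qconj :: "nat \<Rightarrow> ('a::field_char_0 \<Rightarrow> real) \<Rightarrow> (nat \<Rightarrow> 'a) \<Rightarrow> 'a \<Rightarrow> 'a \<Rightarrow> 'a" where
  "Qconj p nrm a lam z = (let h = hfix p nrm a lam in
      Pfam p lam (z + h - 1) + ps_eval nrm a (z + h - 1) + 1 - h)"

definition filled_set :: "('a::field_char_0 \<Rightarrow> real) \<Rightarrow> ('a \<Rightarrow> 'a) \<Rightarrow> real \<Rightarrow> 'a set" where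
  "filled_set nrm f r = {z. \<forall>n. nrm ((f ^^ n) z) \<le> r}"

end

theory Submission
  imports Defs
begin

text \<open>Write \<open>P\<^sub>\<lambda>(w) = w\<^sup>p (w + (\<lambda>/p)(1 - w))\<close>. If \<open>|w| \<ge> 1\<close> and \<open>|w - 1| \<ge> 1\<close>, the term
  \<open>(\<lambda>/p)(1 - w)\<close> dominates, so \<open>|P\<^sub>\<lambda>(w)| = p |w|\<^sup>p |w - 1| \<ge> p |w|\<close>, while \<open>Q\<close> and the
  translation by \<open>h(\<lambda>) - 1\<close> have norm \<open>< 1\<close> and change nothing. Hence every point of \<open>B\<close> outside
  \<open>B\<^sub>0 \<union> B\<^sub>1\<close> is pushed outward by a factor \<open>p\<close> at each step and leaves \<open>B\<close>. The bound
  \<open>|h(\<lambda>) - 1| < 1\<close> holds because \<open>h(\<lambda>)\<close> is the fixed point of a Newton-type map that contracts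
  the disc \<open>|w - 1| \<le> |Q(1)|/p\<close> by the factor \<open>\<parallel>Q\<parallel>\<^sub>B/p < 1\<close>.\<close>

locale nonarch_field =
  fixes nrm :: "'a::field_char_0 \<Rightarrow> real"
  assumes nrm_nonneg: "nrm x \<ge> 0"
    and nrm_eq_0_iff: "nrm x = 0 \<longleftrightarrow> x = 0"
    and nrm_mult: "nrm (x * y) = nrm x * nrm y"
    and nrm_add_le_max: "nrm (x + y) \<le> max (nrm x) (nrm y)"
    and nrm_complete: "\<And>X::nat \<Rightarrow> 'a. \<forall>e>0. \<exists>N. \<forall>m\<ge>N. \<forall>n\<ge>N. nrm (X m - X n) < e
          \<Longrightarrow> \<exists>L. (\<lambda>n. nrm (X n - L)) \<longlonglongrightarrow> 0"
begin

lemma nrm_zero [simp]: "nrm 0 = 0"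
  using nrm_eq_0_iff by simp

lemma nrm_one [simp]: "nrm 1 = 1"
  using nrm_mult[of 1 1] nrm_eq_0_iff[of 1] by simp

lemma nrm_minus [simp]: "nrm (- x) = nrm x"
proof -
  have "nrm (-1) * nrm (-1) = 1"
    using nrm_mult[of "-1" "-1"] by simp
  then have "(nrm (-1) - 1) * (nrm (-1) + 1) = 0"
    by (simp add: algebra_simps)
  then have "nrm (-1) = 1"
    using nrm_nonneg[of "-1"] by simp
  then show ?thesis
    using nrm_mult[of "-1" x] by simp
qed

lemma nrm_minus_commute: "nrm (x - y) = nrm (y - x)"
  by (metis nrm_minus minus_diff_eq)

lemma nrm_diff_le_max: "nrm (x - y) \<le> max (nrm x) (nrm y)"
  using nrm_add_le_max[of x "- y"] by simp

lemma nrm_triangle_max: "nrm (x - z) \<le> max (nrm (x - y)) (nrm (y - z))"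
  using nrm_add_le_max[of "x - y" "y - z"] by simp

lemma nrm_add_eq_right:
  assumes "nrm x < nrm y"
  shows "nrm (x + y) = nrm y"
proof -
  have "nrm y \<le> max (nrm (x + y)) (nrm x)"
    using nrm_diff_le_max[of "x + y" x] by simp
  then show ?thesis
    using nrm_add_le_max[of x y] assms by linarith
qed

lemma nrm_add_eq_left: "nrm y < nrm x \<Longrightarrow> nrm (x + y) = nrm x"
  using nrm_add_eq_right[of y x] by (simp add: add.commute)

lemma nrm_diff_one_eq: "1 < nrm x \<Longrightarrow> nrm (x - 1) = nrm x"
  using nrm_add_eq_left[of "- 1" x] by simp

lemma nrm_le_one_if_diff_one_le: "nrm (x - 1) \<le> 1 \<Longrightarrow> nrm x \<le> 1"
  using nrm_add_le_max[of "x - 1" 1] by simp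

lemma nrm_power: "nrm (x ^ n) = nrm x ^ n"
  by (induction n) (simp_all add: nrm_mult)

lemma nrm_divide: "nrm (x / y) = nrm x / nrm y"
proof (cases "y = 0")
  case False
  then show ?thesis
    using nrm_mult[of "x / y" y] nrm_eq_0_iff[of y] by (simp add: field_simps)
qed simp

lemma nrm_of_nat_le_one: "nrm (of_nat n) \<le> 1"
proof (induction n)
  case (Suc n)
  then show ?case
    using nrm_add_le_max[of 1 "of_nat n"] by simp
qed simp

lemma nrm_sum_le:
  assumes "\<And>i. i \<in> A \<Longrightarrow> nrm (f i) \<le> M" and "0 \<le> M"
  shows "nrm (sum f A) \<le> M"
  using assms
proof (induction A rule: infinite_finite_induct)
  case (insert x F)
  then have "nrm (f x) \<le> M" "nrm (sum f F) \<le> M"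
    by simp_all
  then show ?case
    using insert.hyps order_trans[OF nrm_add_le_max[of "f x" "sum f F"]] by simp
qed simp_all

lemma nrm_tendsto_zero_eventually:
  assumes "(\<lambda>n. nrm (X n)) \<longlonglongrightarrow> 0" and "e > 0"
  shows "\<exists>N. \<forall>n\<ge>N. nrm (X n) < e"
  using assms unfolding LIMSEQ_def by (metis dist_real_def diff_zero abs_of_nonneg nrm_nonneg)

lemma nrm_tendsto_zero_if_le:
  assumes "g \<longlonglongrightarrow> 0" and "\<And>n. nrm (X n) \<le> g n"
  shows "(\<lambda>n. nrm (X n)) \<longlonglongrightarrow> 0"
  by (rule tendsto_sandwich[of "\<lambda>_. 0" _ _ g]) (use assms nrm_nonneg in auto)

lemma nrm_limit_le:
  assumes lim: "(\<lambda>n. nrm (X n - L)) \<longlonglongrightarrow> 0" and bound: "\<And>n. n \<ge> N \<Longrightarrow> nrm (X n) \<le> M"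
  shows "nrm L \<le> M"
proof (rule ccontr)
  assume "\<not> nrm L \<le> M"
  moreover have "M \<ge> 0"
    using bound[of N] nrm_nonneg[of "X N"] by linarith
  ultimately obtain N' where N': "\<And>n. n \<ge> N' \<Longrightarrow> nrm (X n - L) < nrm L"
    using nrm_tendsto_zero_eventually[OF lim, of "nrm L"] by auto
  define n where "n = max N N'"
  have "nrm L \<le> max (nrm (X n)) (nrm (X n - L))"
    using nrm_diff_le_max[of "X n" "X n - L"] by simp
  also have "\<dots> < nrm L"
    using N'[of n] bound[of n] \<open>\<not> nrm L \<le> M\<close> by (auto simp: n_def)
  finally show False by simp
qed

lemma nrm_limit_unique:
  assumes "(\<lambda>n. nrm (X n - L)) \<longlonglongrightarrow> 0" and "(\<lambda>n. nrm (X n - L')) \<longlonglongrightarrow> 0"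
  shows "L = L'"
proof -
  have "nrm (L - L') \<le> e" if "e > 0" for e
  proof -
    obtain N where "\<And>n. n \<ge> N \<Longrightarrow> nrm (X n - L') < e"
      using nrm_tendsto_zero_eventually[OF assms(2) \<open>e > 0\<close>] by blast
    moreover have "(\<lambda>n. nrm ((X n - L') - (L - L'))) \<longlonglongrightarrow> 0"
      using assms(1) by simp
    ultimately show ?thesis
      using nrm_limit_le[of "\<lambda>n. X n - L'" "L - L'" N e] by fastforce
  qed
  then have "nrm (L - L') \<le> 0"
    by (meson dense not_le)
  then show ?thesis
    using nrm_nonneg[of "L - L'"] nrm_eq_0_iff by simp
qed

lemma nrm_convergent_if_steps_tendsto_zero:
  assumes steps: "(\<lambda>n. nrm (X (Suc n) - X n)) \<longlonglongrightarrow> 0"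
  shows "\<exists>L. (\<lambda>n. nrm (X n - L)) \<longlonglongrightarrow> 0"
proof (rule nrm_complete, intro allI impI)
  fix e :: real
  assume "e > 0"
  then obtain N where N: "\<And>n. n \<ge> N \<Longrightarrow> nrm (X (Suc n) - X n) < e"
    using nrm_tendsto_zero_eventually[OF steps] by blast
  have far: "nrm (X m - X n) < e" if "N \<le> n" "n \<le> m" for m n
    using \<open>n \<le> m\<close>
  proof (induction m rule: dec_induct)
    case (step m)
    then show ?case
      using nrm_triangle_max[of "X (Suc m)" "X n" "X m"] N[of m] \<open>N \<le> n\<close> by simp
  qed (simp add: \<open>e > 0\<close>)
  show "\<exists>N. \<forall>m\<ge>N. \<forall>n\<ge>N. nrm (X m - X n) < e"
    by (metis far nle_le nrm_minus_commute)
qed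

lemma nrm_summable:
  assumes "(\<lambda>i. nrm (b i)) \<longlonglongrightarrow> 0"
  shows "\<exists>L. (\<lambda>n. nrm ((\<Sum>i<n. b i) - L)) \<longlonglongrightarrow> 0"
  by (rule nrm_convergent_if_steps_tendsto_zero) (simp add: assms)


lemma nrm_contraction_unique_fixpoint:
  assumes k: "0 \<le> k" "k < 1"
    and centre: "nrm (T x0 - x0) \<le> s"
    and lip: "\<And>w v. nrm (w - x0) \<le> s \<Longrightarrow> nrm (v - x0) \<le> s \<Longrightarrow> nrm (T w - T v) \<le> k * nrm (w - v)"
  shows "\<exists>!w. nrm (w - x0) \<le> s \<and> T w = w"
proof -
  have s: "0 \<le> s"
    using centre nrm_nonneg order_trans by blast
  have maps: "nrm (T w - x0) \<le> s" if "nrm (w - x0) \<le> s" for w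
  proof -
    have "nrm (T w - T x0) \<le> k * nrm (w - x0)"
      using lip that s by simp
    also have "\<dots> \<le> s"
      using that k nrm_nonneg[of "w - x0"] by (metis mult_le_one mult_left_le_one_le order_trans less_imp_le)
    finally show ?thesis
      using nrm_triangle_max[of "T w" x0 "T x0"] centre by simp
  qed
  define x where "x n = (T ^^ n) x0" for n
  have x_Suc: "x (Suc n) = T (x n)" for n
    by (simp add: x_def)
  have x_in: "nrm (x n - x0) \<le> s" for n
    by (induction n) (simp_all add: s x_Suc maps, simp add: x_def s)
  have steps: "nrm (x (Suc n) - x n) \<le> k ^ n * s" for n
  proof (induction n)
    case 0
    then show ?case
      using centre by (simp add: x_def)
  next
    case (Suc n)
    have "nrm (x (Suc (Suc n)) - x (Suc n)) \<le> k * nrm (x (Suc n) - x n)"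
      using lip[OF x_in[of "Suc n"] x_in[of n]] by (simp only: x_Suc)
    also have "\<dots> \<le> k * (k ^ n * s)"
      by (rule mult_left_mono[OF Suc k(1)])
    finally show ?case by simp
  qed
  have "(\<lambda>n. k ^ n * s) \<longlonglongrightarrow> 0"
    using k by (intro tendsto_mult_left_zero LIMSEQ_power_zero) simp
  then have "(\<lambda>n. nrm (x (Suc n) - x n)) \<longlonglongrightarrow> 0"
    using steps by (rule nrm_tendsto_zero_if_le)
  then obtain L where L: "(\<lambda>n. nrm (x n - L)) \<longlonglongrightarrow> 0"
    using nrm_convergent_if_steps_tendsto_zero by blast
  have L_in: "nrm (L - x0) \<le> s"
    by (rule nrm_limit_le[of "\<lambda>n. x n - x0" _ 0]) (use L x_in in simp_all)
  have "(\<lambda>n. k * nrm (x n - L)) \<longlonglongrightarrow> 0"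
    using tendsto_mult_right_zero[OF L] by simp
  then have "(\<lambda>n. nrm (x (Suc n) - T L)) \<longlonglongrightarrow> 0"
    by (rule nrm_tendsto_zero_if_le) (simp add: x_Suc lip[OF x_in L_in])
  then have fix_L: "T L = L"
    by (rule nrm_limit_unique[OF _ LIMSEQ_Suc[OF L]])
  have "w = L" if "nrm (w - x0) \<le> s" "T w = w" for w
  proof -
    have "nrm (w - L) \<le> k * nrm (w - L)"
      using lip[OF that(1) L_in] that(2) fix_L by simp
    then have "nrm (w - L) \<le> 0"
      using k nrm_nonneg[of "w - L"] by (metis mult_le_cancel_right1 not_le)
    then show ?thesis
      using nrm_nonneg[of "w - L"] nrm_eq_0_iff by simp
  qed
  then show ?thesis
    using L_in fix_L by blast
qed

lemma nrm_power_diff_le: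
  assumes "nrm w \<le> 1" "nrm v \<le> 1"
  shows "nrm (w ^ n - v ^ n) \<le> nrm (w - v)"
proof (induction n)
  case (Suc n)
  have "w ^ Suc n - v ^ Suc n = w * (w ^ n - v ^ n) + (w - v) * v ^ n"
    by (simp add: algebra_simps)
  moreover have "nrm (w * (w ^ n - v ^ n)) \<le> nrm (w - v)"
    using Suc assms nrm_nonneg by (simp add: nrm_mult) (metis mult_left_le_one_le order_trans)
  moreover have "nrm ((w - v) * v ^ n) \<le> nrm (w - v)"
    using assms nrm_nonneg by (simp add: nrm_mult nrm_power mult_right_le_one_le power_le_one)
  ultimately show ?case
    using nrm_add_le_max[of "w * (w ^ n - v ^ n)" "(w - v) * v ^ n"] by simp
qed (simp add: nrm_nonneg)

lemma nrm_power_diff_linear_le: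
  assumes w: "nrm (w - 1) \<le> t" and v: "nrm (v - 1) \<le> t" and "t \<le> 1"
  shows "nrm (w ^ n - v ^ n - of_nat n * (w - v)) \<le> t * nrm (w - v)"
proof (induction n)
  case 0
  show ?case
    using w nrm_nonneg[of "w - 1"] nrm_nonneg[of "w - v"] by simp
next
  case (Suc n)
  have w1: "nrm w \<le> 1" and v1: "nrm v \<le> 1"
    using w v \<open>t \<le> 1\<close> nrm_le_one_if_diff_one_le by auto
  have "w ^ Suc n - v ^ Suc n - of_nat (Suc n) * (w - v) =
      w * (w ^ n - v ^ n - of_nat n * (w - v)) + (of_nat n * (w - 1) * (w - v) + (v ^ n - 1) * (w - v))"
    by (simp add: algebra_simps)
  moreover have "nrm (w * (w ^ n - v ^ n - of_nat n * (w - v))) \<le> t * nrm (w - v)"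
    using Suc w1 nrm_nonneg by (simp add: nrm_mult) (metis mult_left_le_one_le order_trans)
  moreover have "nrm (of_nat n * (w - 1) * (w - v)) \<le> t * nrm (w - v)"
  proof -
    have "nrm (of_nat n * (w - 1)) \<le> t"
      using nrm_of_nat_le_one[of n] w nrm_nonneg
      by (simp add: nrm_mult) (metis mult_le_one mult_left_le_one_le order_trans)
    then show ?thesis
      by (simp add: nrm_mult mult_right_mono nrm_nonneg)
  qed
  moreover have "nrm ((v ^ n - 1) * (w - v)) \<le> t * nrm (w - v)"
  proof -
    have "nrm (v ^ n - 1 ^ n) \<le> t"
      using nrm_power_diff_le[OF v1, of 1 n] v by simp
    then show ?thesis
      by (simp add: nrm_mult mult_right_mono nrm_nonneg)
  qed
  ultimately show ?case
    using nrm_add_le_max[of "w * (w ^ n - v ^ n - of_nat n * (w - v))"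
        "of_nat n * (w - 1) * (w - v) + (v ^ n - 1) * (w - v)"]
      nrm_add_le_max[of "of_nat n * (w - 1) * (w - v)" "(v ^ n - 1) * (w - v)"]
    by simp
qed

lemma unit_discs_disjoint: "{z. nrm z < 1} \<inter> {z. nrm (z - 1) < 1} = {}"
proof -
  have "\<not> (nrm z < 1 \<and> nrm (z - 1) < 1)" for z
    using nrm_diff_le_max[of z "z - 1"] by auto
  then show ?thesis
    by blast
qed

context
  fixes r :: real and a :: "nat \<Rightarrow> 'a"
  assumes conv: "ps_conv_on nrm r a"
begin

lemma ps_coeff_le_ps_norm: "nrm (a i) * r ^ i \<le> ps_norm nrm r a"
proof -
  have "convergent (\<lambda>i. nrm (a i) * r ^ i)"
    using conv unfolding ps_conv_on_def convergent_def by blast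
  then have "bdd_above (range (\<lambda>i. nrm (a i) * r ^ i))"
    by (intro Bseq_bdd_above convergent_imp_Bseq)
  then show ?thesis
    unfolding ps_norm_def by (rule cSUP_upper[rotated]) simp
qed

lemma ps_norm_nonneg: "0 \<le> ps_norm nrm r a"
  using ps_coeff_le_ps_norm[of 0] nrm_nonneg[of "a 0"] by simp

lemma ps_term_le:
  assumes "nrm z \<le> r"
  shows "nrm (a i * z ^ i) \<le> nrm (a i) * r ^ i"
  using assms nrm_nonneg by (auto simp: nrm_mult nrm_power intro!: mult_left_mono power_mono)

lemma ps_eval_tendsto:
  assumes "nrm z \<le> r"
  shows "(\<lambda>n. nrm ((\<Sum>i<n. a i * z ^ i) - ps_eval nrm a z)) \<longlonglongrightarrow> 0"
proof -
  have "(\<lambda>i. nrm (a i * z ^ i)) \<longlonglongrightarrow> 0"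
    using conv ps_term_le[OF assms] unfolding ps_conv_on_def by (rule nrm_tendsto_zero_if_le)
  then obtain L where L: "(\<lambda>n. nrm ((\<Sum>i<n. a i * z ^ i) - L)) \<longlonglongrightarrow> 0"
    using nrm_summable[of "\<lambda>i. a i * z ^ i"] by blast
  moreover have "ps_eval nrm a z = L"
    unfolding ps_eval_def using L by (rule the_equality) (rule nrm_limit_unique[OF _ L])
  ultimately show ?thesis by simp
qed

lemma ps_eval_le_ps_norm:
  assumes "nrm z \<le> r"
  shows "nrm (ps_eval nrm a z) \<le> ps_norm nrm r a"
  using ps_eval_tendsto[OF assms]
proof (rule nrm_limit_le)
  show "nrm (\<Sum>i<n. a i * z ^ i) \<le> ps_norm nrm r a" for n
    using order_trans[OF ps_term_le[OF assms] ps_coeff_le_ps_norm] ps_norm_nonneg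
    by (rule nrm_sum_le)
qed

lemma ps_eval_lipschitz:
  assumes "1 \<le> r" and w: "nrm w \<le> 1" and v: "nrm v \<le> 1"
  shows "nrm (ps_eval nrm a w - ps_eval nrm a v) \<le> ps_norm nrm r a * nrm (w - v)"
proof -
  let ?S = "\<lambda>z n. \<Sum>i<n. a i * z ^ i"
  have coeff: "nrm (a i) \<le> ps_norm nrm r a" for i
  proof -
    have "nrm (a i) * 1 \<le> nrm (a i) * r ^ i"
      using \<open>1 \<le> r\<close> nrm_nonneg[of "a i"] by (intro mult_left_mono one_le_power) auto
    then show ?thesis
      using ps_coeff_le_ps_norm[of i] by simp
  qed
  have "(\<lambda>n. nrm (?S w n - ps_eval nrm a w) + nrm (?S v n - ps_eval nrm a v)) \<longlonglongrightarrow> 0"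
    using tendsto_add[OF ps_eval_tendsto ps_eval_tendsto] w v \<open>1 \<le> r\<close> by simp
  then have "(\<lambda>n. nrm ((?S w n - ?S v n) - (ps_eval nrm a w - ps_eval nrm a v))) \<longlonglongrightarrow> 0"
  proof (rule nrm_tendsto_zero_if_le)
    show "nrm ((?S w n - ?S v n) - (ps_eval nrm a w - ps_eval nrm a v))
        \<le> nrm (?S w n - ps_eval nrm a w) + nrm (?S v n - ps_eval nrm a v)" for n
      using nrm_diff_le_max[of "?S w n - ps_eval nrm a w" "?S v n - ps_eval nrm a v"]
        nrm_nonneg[of "?S w n - ps_eval nrm a w"] nrm_nonneg[of "?S v n - ps_eval nrm a v"]
      by (simp add: algebra_simps)
  qed
  then show ?thesis
  proof (rule nrm_limit_le)
    fix n
    have "?S w n - ?S v n = (\<Sum>i<n. a i * (w ^ i - v ^ i))"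
      by (simp add: sum_subtractf algebra_simps)
    also have "nrm \<dots> \<le> ps_norm nrm r a * nrm (w - v)"
    proof (rule nrm_sum_le)
      show "nrm (a i * (w ^ i - v ^ i)) \<le> ps_norm nrm r a * nrm (w - v)" for i
        unfolding nrm_mult
        by (rule mult_mono[OF coeff nrm_power_diff_le[OF w v] ps_norm_nonneg nrm_nonneg])
      show "0 \<le> ps_norm nrm r a * nrm (w - v)"
        by (simp add: ps_norm_nonneg nrm_nonneg)
    qed
    finally show "nrm (?S w n - ?S v n) \<le> ps_norm nrm r a * nrm (w - v)" .
  qed
qed

end

end

lemma Pfam_factor: "Pfam p lam w = w ^ p * (w + lam / of_nat p * (1 - w))"
proof -
  have "mu * w ^ p + (1 - mu) * w ^ (p + 1) = w ^ p * (w + mu * (1 - w))" for mu :: 'a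
    by (simp add: algebra_simps)
  then show ?thesis
    unfolding Pfam_def .
qed

lemma Pfam_diff_linear:
  "Pfam p lam w - Pfam p lam v - (1 + (of_nat p - lam / of_nat p)) * (w - v) =
     lam / of_nat p * (w ^ p - v ^ p - of_nat p * (w - v)) +
     (1 - lam / of_nat p) * (w ^ (p + 1) - v ^ (p + 1) - of_nat (p + 1) * (w - v))"
proof -
  have "mu * w ^ p + (1 - mu) * w ^ (p + 1) - (mu * v ^ p + (1 - mu) * v ^ (p + 1))
      - (1 + (n - mu)) * (w - v) =
      mu * (w ^ p - v ^ p - n * (w - v)) + (1 - mu) * (w ^ (p + 1) - v ^ (p + 1) - (n + 1) * (w - v))"
    for mu n :: 'a
    by (simp add: algebra_simps)
  from this[of "lam / of_nat p" "of_nat p"] show ?thesis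
    unfolding Pfam_def by (simp only: of_nat_add of_nat_1)
qed

lemma newton_step_diff:
  fixes c :: "'a::field"
  assumes "c \<noteq> 0"
  shows "(w - (Pw + Qw - w) / c) - (v - (Pv + Qv - v) / c) = - ((Pw - Pv - (1 + c) * (w - v)) + (Qw - Qv)) / c"
  using assms by (simp add: field_simps)

locale perturbed_family = nonarch_field nrm for nrm :: "'a::field_char_0 \<Rightarrow> real" +
  fixes p :: nat and rhat :: real and a :: "nat \<Rightarrow> 'a" and lam :: 'a
  assumes p_ge_2: "2 \<le> p" and nrm_p: "nrm (of_nat p) = 1 / real p"
    and conv: "ps_conv_on nrm rhat a" and rhat_ge_1: "1 \<le> rhat"
    and ps_norm_less_1: "ps_norm nrm rhat a < 1" and lam_near_1: "nrm (lam - 1) < 1"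
begin

abbreviation "Q \<equiv> ps_eval nrm a"
abbreviation "K \<equiv> ps_norm nrm rhat a"
abbreviation "rad \<equiv> nrm (Q 1) / real p"

text \<open>\<open>c = P\<^sub>\<lambda>'(1) - 1\<close>, so \<open>newton\<close> is a Newton-type map whose fixed points are those of
  \<open>P\<^sub>\<lambda> + Q\<close>.\<close>

abbreviation "c \<equiv> of_nat p - lam / of_nat p"
abbreviation "newton w \<equiv> w - (Pfam p lam w + Q w - w) / c"

lemma nrm_lam: "nrm lam = 1"
  using nrm_add_eq_left[of "lam - 1" 1] lam_near_1 by simp

lemma nrm_lam_div_p: "nrm (lam / of_nat p) = real p"
  using nrm_lam nrm_p p_ge_2 by (simp add: nrm_divide)

lemma nrm_one_minus_lam_div_p: "nrm (1 - lam / of_nat p) = real p"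
  using nrm_add_eq_right[of 1 "- (lam / of_nat p)"] nrm_lam_div_p p_ge_2 by simp

lemma nrm_c: "nrm c = real p"
proof -
  have "1 / real p \<le> 1" "1 < real p"
    using p_ge_2 by simp_all
  then have "1 / real p < real p"
    by linarith
  then show ?thesis
    using nrm_add_eq_right[of "of_nat p" "- (lam / of_nat p)"] nrm_lam_div_p nrm_p by simp
qed

lemma c_nonzero: "c \<noteq> 0"
  using nrm_c p_ge_2 by force

lemma rad_nonneg: "0 \<le> rad"
  by (simp add: nrm_nonneg)

lemma p_rad_le: "real p * rad \<le> K"
  using ps_eval_le_ps_norm[OF conv, of 1] rhat_ge_1 p_ge_2 by simp

lemma rad_less_1: "rad < 1"
proof -
  have "1 * rad \<le> real p * rad"
    using p_ge_2 rad_nonneg by (intro mult_right_mono) simp_all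
  then show ?thesis
    using p_rad_le ps_norm_less_1 by simp
qed

lemma newton_lipschitz:
  assumes w: "nrm (w - 1) \<le> rad" and v: "nrm (v - 1) \<le> rad"
  shows "nrm (newton w - newton v) \<le> K / real p * nrm (w - v)"
proof -
  let ?d = "nrm (w - v)"
  let ?A = "lam / of_nat p * (w ^ p - v ^ p - of_nat p * (w - v))"
  let ?B = "(1 - lam / of_nat p) * (w ^ (p + 1) - v ^ (p + 1) - of_nat (p + 1) * (w - v))"
  have "rad \<le> 1"
    using rad_less_1 by simp
  have "real p * (rad * ?d) \<le> K * ?d"
    unfolding mult.assoc[symmetric] by (rule mult_right_mono[OF p_rad_le nrm_nonneg])
  moreover have "nrm ?A \<le> real p * (rad * ?d)"
    unfolding nrm_mult nrm_lam_div_p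
    by (rule mult_left_mono[OF nrm_power_diff_linear_le[OF w v \<open>rad \<le> 1\<close>]]) simp
  moreover have "nrm ?B \<le> real p * (rad * ?d)"
    unfolding nrm_mult nrm_one_minus_lam_div_p
    by (rule mult_left_mono[OF nrm_power_diff_linear_le[OF w v \<open>rad \<le> 1\<close>]]) simp
  moreover have "nrm (Q w - Q v) \<le> K * ?d"
    using ps_eval_lipschitz[OF conv rhat_ge_1] w v \<open>rad \<le> 1\<close> nrm_le_one_if_diff_one_le by auto
  ultimately have "nrm (?A + ?B + (Q w - Q v)) \<le> K * ?d"
    using nrm_add_le_max[of "?A + ?B" "Q w - Q v"] nrm_add_le_max[of ?A ?B] by simp
  moreover have "nrm (newton w - newton v) = nrm (?A + ?B + (Q w - Q v)) / real p"
    unfolding newton_step_diff[OF c_nonzero] Pfam_diff_linear by (simp only: nrm_divide nrm_minus nrm_c)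
  ultimately show ?thesis
    by (simp add: divide_right_mono)
qed

lemma hfix_near_1: "nrm (hfix p nrm a lam - 1) \<le> rad"
proof -
  have "Pfam p lam 1 = 1"
    by (simp add: Pfam_def)
  then have "newton 1 - 1 = - (Q 1 / c)"
    by simp
  then have centre: "nrm (newton 1 - 1) \<le> rad"
    by (simp only: nrm_minus nrm_divide nrm_c order_refl)
  have "0 \<le> K / real p" "K / real p < 1"
    using ps_norm_nonneg[OF conv] ps_norm_less_1 p_ge_2 by simp_all
  then have "\<exists>!w. nrm (w - 1) \<le> rad \<and> newton w = w"
    using centre newton_lipschitz by (rule nrm_contraction_unique_fixpoint)
  moreover have "newton w = w \<longleftrightarrow> Pfam p lam w + Q w = w" for w
    using c_nonzero by simp
  ultimately have "\<exists>!w. nrm (w - 1) \<le> rad \<and> Pfam p lam w + Q w = w"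
    by (simp only:)
  then show ?thesis
    unfolding hfix_def by (rule conjunct1[OF theI'])
qed

lemma nrm_Qconj_ge:
  assumes z: "1 \<le> nrm z" "1 \<le> nrm (z - 1)" "nrm z \<le> rhat"
  shows "real p * nrm z \<le> nrm (Qconj p nrm a lam z)"
proof -
  define h where "h = hfix p nrm a lam"
  define w where "w = z + h - 1"
  have h: "nrm (h - 1) < 1"
    using hfix_near_1 rad_less_1 unfolding h_def by simp
  have "nrm w = nrm (z + (h - 1))"
    by (simp add: w_def algebra_simps)
  also have "\<dots> = nrm z"
    by (rule nrm_add_eq_left) (use h z in linarith)
  finally have w_z: "nrm w = nrm z" .
  have "nrm (w - 1) = nrm ((z - 1) + (h - 1))"
    by (simp add: w_def algebra_simps)
  also have "\<dots> = nrm (z - 1)"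
    by (rule nrm_add_eq_left) (use h z in linarith)
  finally have w: "nrm w = nrm z" "nrm (w - 1) = nrm (z - 1)"
    using w_z by simp_all
  have "nrm w \<le> nrm (w - 1)"
    using nrm_add_le_max[of "w - 1" 1] w z by simp
  moreover have "nrm (lam / of_nat p * (1 - w)) = real p * nrm (w - 1)"
    by (simp only: nrm_mult nrm_lam_div_p nrm_minus_commute[of 1 w])
  moreover have "nrm (w - 1) < real p * nrm (w - 1)"
    using p_ge_2 w z by simp
  ultimately have factor: "nrm (w + lam / of_nat p * (1 - w)) = real p * nrm (w - 1)"
    using nrm_add_eq_right by simp
  have "real p * nrm z \<le> nrm z ^ p * real p"
    using z p_ge_2 by (simp add: self_le_power)
  also have "\<dots> \<le> nrm z ^ p * (real p * nrm (z - 1))"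
    using z by (intro mult_left_mono) (simp_all add: mult_le_cancel_left1)
  also have "\<dots> = nrm (Pfam p lam w)"
    by (simp only: Pfam_factor nrm_mult nrm_power factor w)
  finally have P: "real p * nrm z \<le> nrm (Pfam p lam w)" .
  have "nrm (Q w) < 1"
    using ps_eval_le_ps_norm[OF conv, of w] ps_norm_less_1 w z by simp
  then have "nrm (Q w + (1 - h)) < 1"
    using nrm_add_le_max[of "Q w" "1 - h"] h nrm_minus_commute[of h 1] by simp
  moreover have "2 \<le> real p * nrm z"
    using p_ge_2 z by (simp add: mult_le_cancel_left1 order_trans[of 2 "real p"])
  ultimately have "nrm (Pfam p lam w + (Q w + (1 - h))) = nrm (Pfam p lam w)"
    using P by (intro nrm_add_eq_left) linarith
  moreover have "Qconj p nrm a lam z = Pfam p lam w + (Q w + (1 - h))"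
    by (simp add: Qconj_def Let_def h_def w_def)
  ultimately show ?thesis
    using P by simp
qed

lemma filled_set_subset: "filled_set nrm (Qconj p nrm a lam) rhat \<subseteq> {z. nrm z < 1} \<union> {z. nrm (z - 1) < 1}"
proof (rule subsetI, rule ccontr)
  let ?f = "Qconj p nrm a lam"
  fix z
  assume "z \<in> filled_set nrm ?f rhat"
  then have bounded: "nrm ((?f ^^ n) z) \<le> rhat" for n
    by (simp add: filled_set_def)
  assume "z \<notin> {z. nrm z < 1} \<union> {z. nrm (z - 1) < 1}"
  then have z: "1 \<le> nrm z" "1 \<le> nrm (z - 1)"
    by auto
  have grow: "real p ^ n \<le> nrm ((?f ^^ n) z) \<and> 1 \<le> nrm ((?f ^^ n) z - 1)" for n
  proof (induction n)
    case (Suc n)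
    have "1 \<le> real p ^ n"
      using p_ge_2 by simp
    then have "real p * real p ^ n \<le> real p * nrm ((?f ^^ n) z)"
      using Suc by (intro mult_left_mono) simp_all
    also have "\<dots> \<le> nrm ((?f ^^ Suc n) z)"
      using Suc \<open>1 \<le> real p ^ n\<close> nrm_Qconj_ge[OF _ _ bounded[of n]] by simp
    finally have "real p ^ Suc n \<le> nrm ((?f ^^ Suc n) z)"
      by simp
    moreover have "1 < real p ^ Suc n"
      using p_ge_2 by (intro one_less_power) simp_all
    ultimately show ?case
      using nrm_diff_one_eq by simp
  qed (use z in simp)
  obtain n where "rhat < real p ^ n"
    using real_arch_pow[of "real p" rhat] p_ge_2 by auto
  then show False
    using grow[of n] bounded[of n] by simp
qed

end

theorem proposition3p7:
  fixes nrm :: "'a::field_char_0 \<Rightarrow> real" and p :: nat and rhat :: real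
    and a :: "nat \<Rightarrow> 'a" and lam :: 'a
  assumes "prime p"
    and "is_Cp p nrm"
    and "rhat > 1" and "\<exists>c. c \<noteq> 0 \<and> nrm c = rhat"
    and "ps_conv_on nrm rhat a"
    and "ps_norm nrm rhat a < real p powr (- 1 / (real p - 1))"
    and "nrm (lam - 1) < 1"
  shows "filled_set nrm (Qconj p nrm a lam) rhat
           \<subseteq> {z. nrm z < 1} \<union> {z. nrm (z - 1) < 1}
         \<and> {z. nrm z < 1} \<inter> {z. nrm (z - 1) < 1} = {}"
proof -
  have "2 \<le> p"
    using \<open>prime p\<close> prime_ge_2_nat by blast
  have "real p powr (- 1 / (real p - 1)) \<le> real p powr 0"
    using \<open>2 \<le> p\<close> by (intro powr_mono) auto
  then have "ps_norm nrm rhat a < 1"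
    using assms(6) \<open>2 \<le> p\<close> by simp
  then interpret perturbed_family nrm p rhat a lam
    using assms \<open>2 \<le> p\<close> unfolding is_Cp_def by unfold_locales auto
  show ?thesis
    using filled_set_subset unit_discs_disjoint by blast
qed

end
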